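(* Let $f,g_1,\dots,g_m$, $\phi$, $\psi$ be as in the context, and consider the HMCP: find $\hat x=\mathrm{col}(\bar x,\tau)\ge0$, $\hat s=\mathrm{col}(\bar s,\kappa)\ge 0$ with $\hat s=\psi(\hat x)$ and $\hat s\odot\hat x=0$. Then the HMCP is always asymptotically feasible. Furthermore, every asymptotically feasible solution of the HMCP is an asymptotically complementary solution.
   Context: $f,g_1,\dots,g_m:\mathbb{R}^n\to\mathbb{R}$ are twice continuously differentiable convex functions on $\mathbb{R}^n_+$, $g=\mathrm{col}(g_1,\dots,g_m)$, $\bar n=n+m$, $\phi:\mathbb{R}^{\bar n}_+\to\mathbb{R}^{\bar n}$, $\phi(x,y)=\mathrm{col}\big(\nabla f(x)+\sum_{i=1}^m y_i\nabla g_i(x),\ -g(x)\big)$, and $\psi:\mathbb{R}^{\bar n+1}_{++}\to\mathbb{R}^{\bar n+1}$, $\psi(\bar x,\tau)=\mathrm{col}\big(\tau\phi(\bar x/\tau),\ -\bar x^\top\phi(\bar x/\tau)\big)$; $\odot$ is the componentwise product. The HMCP is asymptotically feasible if there exist positive bounded $(\bar x^t,\tau^t,\bar s^t,\kappa^t)>0$, $t>0$, such that $\mathrm{col}(\bar s^t,\kappa^t)-\psi(\bar x^t,\tau^t)\to 0$ as $t\to\infty$; such a family is an asymptotically feasible solution. An asymptotically feasible solution with $(\bar x^t)^\top\bar s^t+\tau^t\kappa^t=0$ is called an asymptotically complementary solution. *)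

theory Defs
  imports "HOL-Analysis.Analysis"
begin

definition C2_on :: "('a::euclidean_space \<Rightarrow> real) \<Rightarrow> 'a set \<Rightarrow> bool" where
  "C2_on f U \<longleftrightarrow>
     (\<exists>(f'::'a \<Rightarrow> ('a \<Rightarrow>\<^sub>L real)) (f''::'a \<Rightarrow> ('a \<Rightarrow>\<^sub>L ('a \<Rightarrow>\<^sub>L real))).
        (\<forall>x\<in>U. (f has_derivative blinfun_apply (f' x)) (at x)) \<and>
        (\<forall>x\<in>U. (f' has_derivative blinfun_apply (f'' x)) (at x)) \<and>
        continuous_on U f'')"

definition nonneg_orthant :: "(real^'n) set" where
  "nonneg_orthant = {x. \<forall>i. 0 \<le> x $ i}"

definition grad :: "(real^'n \<Rightarrow> real) \<Rightarrow> real^'n \<Rightarrow> real^'n" where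
  "grad f x = (\<chi> i. frechet_derivative f (at x) (axis i 1))"

definition phi :: "(real^'n \<Rightarrow> real) \<Rightarrow> ('m::finite \<Rightarrow> real^'n \<Rightarrow> real)
    \<Rightarrow> (real^'n) \<times> (real^'m) \<Rightarrow> (real^'n) \<times> (real^'m)" where
  "phi f g xy = (case xy of (x, y) \<Rightarrow>
      (grad f x + (\<Sum>i\<in>UNIV. (y $ i) *\<^sub>R grad (g i) x), \<chi> i. - g i x))"

definition psi :: "(real^'n \<Rightarrow> real) \<Rightarrow> ('m::finite \<Rightarrow> real^'n \<Rightarrow> real)
    \<Rightarrow> ((real^'n) \<times> (real^'m)) \<times> real \<Rightarrow> ((real^'n) \<times> (real^'m)) \<times> real" where
  "psi f g xt = (case xt of (xb, tau) \<Rightarrow>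
      (tau *\<^sub>R phi f g ((1 / tau) *\<^sub>R xb), - (xb \<bullet> phi f g ((1 / tau) *\<^sub>R xb))))"

definition pos_pair :: "(real^'n) \<times> (real^'m) \<Rightarrow> bool" where
  "pos_pair v \<longleftrightarrow> (\<forall>i. 0 < fst v $ i) \<and> (\<forall>j. 0 < snd v $ j)"

definition asymp_feasible_sol ::
  "(((real^'n) \<times> (real^'m)) \<times> real \<Rightarrow> ((real^'n) \<times> (real^'m)) \<times> real)
   \<Rightarrow> (real \<Rightarrow> (real^'n) \<times> (real^'m)) \<Rightarrow> (real \<Rightarrow> real)
   \<Rightarrow> (real \<Rightarrow> (real^'n) \<times> (real^'m)) \<Rightarrow> (real \<Rightarrow> real) \<Rightarrow> bool" where
  "asymp_feasible_sol P X T S K \<longleftrightarrow>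
     (\<forall>t>0. pos_pair (X t) \<and> 0 < T t \<and> pos_pair (S t) \<and> 0 < K t) \<and>
     bounded ((\<lambda>t. (X t, T t, S t, K t)) ` {0<..}) \<and>
     ((\<lambda>t. (S t, K t) - P (X t, T t)) \<longlongrightarrow> 0) at_top"

definition asymp_feasible ::
  "(((real^'n) \<times> (real^'m)) \<times> real \<Rightarrow> ((real^'n) \<times> (real^'m)) \<times> real) \<Rightarrow> bool" where
  "asymp_feasible P \<longleftrightarrow> (\<exists>X T S K. asymp_feasible_sol P X T S K)"

definition asymp_compl_sol ::
  "(((real^'n) \<times> (real^'m)) \<times> real \<Rightarrow> ((real^'n) \<times> (real^'m)) \<times> real)
   \<Rightarrow> (real \<Rightarrow> (real^'n) \<times> (real^'m)) \<Rightarrow> (real \<Rightarrow> real)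
   \<Rightarrow> (real \<Rightarrow> (real^'n) \<times> (real^'m)) \<Rightarrow> (real \<Rightarrow> real) \<Rightarrow> bool" where
  "asymp_compl_sol P X T S K \<longleftrightarrow>
     asymp_feasible_sol P X T S K \<and>
     ((\<lambda>t. X t \<bullet> S t + T t * K t) \<longlongrightarrow> 0) at_top"

end

theory Submission
  imports Defs
begin

text \<open>The map \<open>psi\<close> is positively homogeneous of degree one and skew, i.e. \<open>v \<bullet> psi v = 0\<close>,
  because its last component is minus the inner product of \<open>xbar\<close> with the first component
  divided by \<open>tau\<close>. Homogeneity makes every positive point asymptotically feasible after
  shrinking it to the origin along its ray: the residual shrinks with it. Skewness turns the
  complementarity gap \<open>xbar \<bullet> sbar + tau kappa\<close> into the inner product of the bounded
  \<open>(xbar, tau)\<close> with the vanishing residual.\<close>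

lemma psi_orthogonal: "v \<bullet> psi f g v = 0"
  by (cases v) (simp add: psi_def inner_Pair inner_scaleR_right)

lemma psi_scaleR:
  assumes "e \<noteq> 0"
  shows "psi f g (e *\<^sub>R v) = e *\<^sub>R psi f g v"
  using assms by (cases v) (simp add: psi_def scaleR_Pair)

lemma Bfun_at_top_if_bounded_image:
  fixes h :: "real \<Rightarrow> 'a::real_normed_vector"
  assumes "bounded (h ` {a<..})"
  shows "Bfun h at_top"
proof -
  obtain B where "\<And>t. t > a \<Longrightarrow> norm (h t) \<le> B"
    using assms by (auto simp: bounded_iff)
  then show ?thesis
    by (intro BfunI[where K = B] eventually_mono[OF eventually_gt_at_top[of a]])
qed

lemma asymp_feasible_if_homogeneous:
  fixes P :: "((real^'n) \<times> (real^'m)) \<times> real \<Rightarrow> ((real^'n) \<times> (real^'m)) \<times> real"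
  assumes homogeneous: "\<And>e v. e > 0 \<Longrightarrow> P (e *\<^sub>R v) = e *\<^sub>R P v"
  shows "asymp_feasible P"
proof -
  define c :: "(real^'n) \<times> (real^'m)" where "c = (\<chi> i. 1, \<chi> j. 1)"
  define e :: "real \<Rightarrow> real" where "e t = 1 / (1 + t)" for t
  have e_pos: "e t > 0" and e_le_1: "e t \<le> 1" if "t > 0" for t
    using that by (simp_all add: e_def)
  have "asymp_feasible_sol P (\<lambda>t. e t *\<^sub>R c) e (\<lambda>t. e t *\<^sub>R c) e"
    unfolding asymp_feasible_sol_def
  proof (intro conjI allI impI)
    let ?p = "(c, 1::real, c, 1::real)"
    have "norm (e t *\<^sub>R ?p) \<le> norm ?p" if "t > 0" for t
    proof -
      have "norm (e t *\<^sub>R ?p) = e t * norm ?p"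
        by (simp only: norm_scaleR abs_of_pos[OF e_pos[OF that]])
      also have "\<dots> \<le> norm ?p"
        using e_pos[OF that] e_le_1[OF that] by (simp add: mult_left_le_one_le)
      finally show ?thesis .
    qed
    then show "bounded ((\<lambda>t. (e t *\<^sub>R c, e t, e t *\<^sub>R c, e t)) ` {0<..})"
      unfolding bounded_iff by (auto simp: scaleR_Pair)
    have "(e \<longlongrightarrow> 0) at_top"
      unfolding e_def by real_asymp
    then have "((\<lambda>t. e t *\<^sub>R ((c, 1) - P (c, 1))) \<longlongrightarrow> 0) at_top"
      using tendsto_scaleR[OF _ tendsto_const] by fastforce
    moreover have "\<forall>\<^sub>F t in at_top.
        e t *\<^sub>R ((c, 1) - P (c, 1)) = (e t *\<^sub>R c, e t) - P (e t *\<^sub>R c, e t)"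
      using eventually_gt_at_top[of 0]
    proof eventually_elim
      case (elim t)
      have "(e t *\<^sub>R c, e t) = e t *\<^sub>R (c, 1)"
        by simp
      then show ?case
        using homogeneous[OF e_pos[OF elim], of "(c, 1)"] by (simp add: scaleR_right_diff_distrib)
    qed
    ultimately show "((\<lambda>t. (e t *\<^sub>R c, e t) - P (e t *\<^sub>R c, e t)) \<longlongrightarrow> 0) at_top"
      using tendsto_cong by fastforce
  qed (use e_pos in \<open>auto simp: pos_pair_def c_def\<close>)
  then show ?thesis
    unfolding asymp_feasible_def by blast
qed

lemma asymp_compl_sol_if_orthogonal:
  assumes orthogonal: "\<And>v. v \<bullet> P v = 0"
    and feasible: "asymp_feasible_sol P X T S K"
  shows "asymp_compl_sol P X T S K"
proof -
  define D where "D = (\<lambda>t. (S t, K t) - P (X t, T t))"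
  have gap_eq: "X t \<bullet> S t + T t * K t = (X t, T t) \<bullet> D t" for t
    using orthogonal[of "(X t, T t)"] by (simp add: D_def inner_diff_right inner_Pair)
  have "bounded_linear (\<lambda>p. (fst p, fst (snd p)))"
    by (intro bounded_linear_Pair bounded_linear_fst bounded_linear_fst_comp bounded_linear_snd)
  moreover have "bounded ((\<lambda>t. (X t, T t, S t, K t)) ` {0<..})"
    using feasible by (simp add: asymp_feasible_sol_def)
  ultimately have "bounded ((\<lambda>p. (fst p, fst (snd p))) ` (\<lambda>t. (X t, T t, S t, K t)) ` {0<..})"
    by (rule bounded_linear_image[rotated])
  then have "Bfun (\<lambda>t. (X t, T t)) at_top"
    by (intro Bfun_at_top_if_bounded_image[where a = 0]) (simp add: image_image)
  moreover have "Zfun D at_top"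
    using feasible by (simp add: asymp_feasible_sol_def D_def tendsto_Zfun_iff)
  ultimately have "Zfun (\<lambda>t. X t \<bullet> S t + T t * K t) at_top"
    unfolding gap_eq by (rule bounded_bilinear.Bfun_prod_Zfun[OF bounded_bilinear_inner])
  with feasible show ?thesis
    by (simp add: asymp_compl_sol_def tendsto_Zfun_iff)
qed

theorem lemma8:
  fixes f :: "real^'n \<Rightarrow> real" and g :: "'m::finite \<Rightarrow> real^'n \<Rightarrow> real"
  assumes "open U" and "nonneg_orthant \<subseteq> U"
    and "C2_on f U" and "\<And>i. C2_on (g i) U"
    and "convex_on nonneg_orthant f" and "\<And>i. convex_on nonneg_orthant (g i)"
  shows "asymp_feasible (psi f g) \<and>
         (\<forall>X T S K. asymp_feasible_sol (psi f g) X T S K \<longrightarrow> asymp_compl_sol (psi f g) X T S K)"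
  using asymp_feasible_if_homogeneous[of "psi f g"] asymp_compl_sol_if_orthogonal[of "psi f g"]
  by (simp add: psi_scaleR psi_orthogonal)

end
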